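(* Let $d\ge3$ and let $T$ be the infinite $d$-regular tree with origin $o$. Index rotor directions as follows: at each vertex $v\neq o$ the neighbors of $v$ are labeled $1,\dots,d$ with label $d$ assigned to the parent of $v$ (its neighbor closer to $o$), and at $o$ the $d$ neighbors are labeled $1,\dots,d$ arbitrarily; a rotor pointing in direction $i$ advances to direction $i+1$ (with $d+1$ read as $1$). If initially every rotor points in direction $d-1$, then every chip in an infinite succession of chips started at $o$ (each performing rotor-router walk until it returns to $o$, rotors not reset) returns to $o$ in finitely many steps.
   Context: Rotor-router walk: a chip at vertex $v$ first advances the rotor at $v$ to the next direction and then moves to the neighbor in that direction. *)

theory Defs
  imports Main
begin

text \<open>Vertices of the infinite d-regular tree T_d are encoded as lists of labels:
  the origin o is [], the neighbour of o in direction i (1 \<le> i \<le> d) is [i], and for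
  v \<noteq> o the neighbour of v in direction i < d is v @ [i] (a child), while direction d
  is the parent butlast v.  Reachable vertices are exactly the lists whose first
  entry lies in {1..d} and whose further entries lie in {1..d-1}.\<close>

type_synonym vertex = "nat list"

definition origin :: vertex where "origin = []"

definition nbr :: "nat \<Rightarrow> vertex \<Rightarrow> nat \<Rightarrow> vertex" where
  "nbr d v i = (if v = [] then [i] else if i = d then butlast v else v @ [i])"

definition next_dir :: "nat \<Rightarrow> nat \<Rightarrow> nat" where
  "next_dir d i = (if i = d then 1 else i + 1)"

type_synonym rotors = "vertex \<Rightarrow> nat"

definition rr_step :: "nat \<Rightarrow> vertex \<times> rotors \<Rightarrow> vertex \<times> rotors" where
  "rr_step d s = (let v = fst s; \<rho> = snd s; \<rho>' = \<rho>(v := next_dir d (\<rho> v))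
                  in (nbr d v (\<rho>' v), \<rho>'))"

definition init_rotors :: "nat \<Rightarrow> rotors" where
  "init_rotors d = (\<lambda>v. d - 1)"

definition return_time :: "nat \<Rightarrow> rotors \<Rightarrow> nat" where
  "return_time d \<rho> = (LEAST t. 0 < t \<and> fst ((rr_step d ^^ t) (origin, \<rho>)) = origin)"

fun chip_rotors :: "nat \<Rightarrow> nat \<Rightarrow> rotors" where
  "chip_rotors d 0 = init_rotors d"
| "chip_rotors d (Suc n) =
     snd ((rr_step d ^^ return_time d (chip_rotors d n)) (origin, chip_rotors d n))"

end

theory Submission
  imports Defs "HOL-Library.Sublist"
begin

text \<open>Call the subtree of a vertex v \<noteq> o "good of level k" if every rotor in
  it at relative depth < k points to the parent (direction d) and every deeper rotor
  points in direction d-1; initially every subtree is good of level 0.  The key fact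
  (lemma excursion) is: a chip entering a good subtree of level k at its root v
  walks inside that subtree, leaves it to the parent of v after finitely many steps,
  and leaves behind a good subtree of level k+1, changing no rotor outside it.
  This is proved by induction on k: at level 0 the rotor at v immediately sends the
  chip back; at level k+1 the rotor at v sends the chip successively into the
  children 1, ..., d-1, each of which is good of level k and is upgraded to level
  k+1 by the induction hypothesis, and finally back to the parent.
  Consequently, if all d subtrees hanging off o are good (of some levels), a chip
  started at o makes one step into such a subtree, returns to o, and all subtrees
  are still good; the theorem follows by induction over the chips.\<close>

definition walk :: "('s \<Rightarrow> 's) \<Rightarrow> ('s \<Rightarrow> bool) \<Rightarrow> nat \<Rightarrow> 's \<Rightarrow> 's \<Rightarrow> bool" where
  "walk f P t x y \<longleftrightarrow> (f ^^ t) x = y \<and> (\<forall>s<t. P ((f ^^ s) x))"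

lemma walk_step: "P x \<Longrightarrow> walk f P 1 x (f x)"
  by (simp add: walk_def)

lemma walk_trans:
  assumes xy: "walk f P a x y" and yz: "walk f P b y z"
  shows "walk f P (a + b) x z"
  unfolding walk_def
proof (intro conjI allI impI)
  have shift: "(f ^^ (s + a)) x = (f ^^ s) y" for s
    using xy by (simp add: walk_def funpow_add)
  show "(f ^^ (a + b)) x = z"
    using shift[of b] yz by (simp add: walk_def add.commute)
  fix s assume "s < a + b"
  then consider "s < a" | s' where "s = s' + a" "s' < b"
    by (metis add.commute add_diff_inverse_nat less_diff_conv2 not_less order_refl)
  then show "P ((f ^^ s) x)"
    by cases (use xy yz shift in \<open>auto simp: walk_def\<close>)
qed

lemma walk_mono: "walk f P t x y \<Longrightarrow> (\<And>s. P s \<Longrightarrow> Q s) \<Longrightarrow> walk f Q t x y"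
  by (simp add: walk_def)

lemma rr_step_eq:
  "rr_step d (v, \<rho>) = (nbr d v (next_dir d (\<rho> v)), \<rho>(v := next_dir d (\<rho> v)))"
  by (simp add: rr_step_def Let_def)

definition good :: "nat \<Rightarrow> nat \<Rightarrow> vertex \<Rightarrow> rotors \<Rightarrow> bool" where
  "good d k v \<rho> \<longleftrightarrow>
     (\<forall>u. set u \<subseteq> {1..<d} \<longrightarrow> \<rho> (v @ u) = (if length u < k then d else d - 1))"

lemma good_unfold:
  "good d k v \<rho> \<longleftrightarrow>
     \<rho> v = (if k = 0 then d - 1 else d) \<and> (\<forall>c\<in>{1..<d}. good d (k - 1) (v @ [c]) \<rho>)"
proof
  assume g: "good d k v \<rho>"
  have "\<rho> v = (if k = 0 then d - 1 else d)"
    using g[unfolded good_def, rule_format, of "[]"] by simp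
  moreover have "good d (k - 1) (v @ [c]) \<rho>" if "c \<in> {1..<d}" for c
    unfolding good_def
  proof (intro allI impI)
    fix u :: "nat list" assume "set u \<subseteq> {1..<d}"
    with that have "\<rho> (v @ c # u) = (if length (c # u) < k then d else d - 1)"
      using g unfolding good_def by (metis insert_subset list.set(2))
    then show "\<rho> ((v @ [c]) @ u) = (if length u < k - 1 then d else d - 1)" by auto
  qed
  ultimately show "\<rho> v = (if k = 0 then d - 1 else d) \<and>
    (\<forall>c\<in>{1..<d}. good d (k - 1) (v @ [c]) \<rho>)" by blast
next
  assume root: "\<rho> v = (if k = 0 then d - 1 else d) \<and>
    (\<forall>c\<in>{1..<d}. good d (k - 1) (v @ [c]) \<rho>)"
  show "good d k v \<rho>"
    unfolding good_def
  proof (intro allI impI)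
    fix u :: "nat list" assume u: "set u \<subseteq> {1..<d}"
    show "\<rho> (v @ u) = (if length u < k then d else d - 1)"
    proof (cases u)
      case Nil then show ?thesis using root by simp
    next
      case (Cons c u')
      then have "good d (k - 1) (v @ [c]) \<rho>" "set u' \<subseteq> {1..<d}" using root u by auto
      then show ?thesis using Cons by (auto simp: good_def)
    qed
  qed
qed

lemma good_cong: "(\<And>w. prefix v w \<Longrightarrow> \<rho>' w = \<rho> w) \<Longrightarrow> good d k v \<rho>' = good d k v \<rho>"
  by (simp add: good_def)

lemma good_fun_upd [simp]: "\<not> prefix v w \<Longrightarrow> good d k v (\<rho>(w := x)) = good d k v \<rho>"
  by (rule good_cong) auto

definition excursion :: "nat \<Rightarrow> vertex \<Rightarrow> rotors \<Rightarrow> nat \<Rightarrow> rotors \<Rightarrow> bool" where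
  "excursion d v \<rho> t \<rho>' \<longleftrightarrow>
     walk (rr_step d) (\<lambda>s. prefix v (fst s)) t (v, \<rho>) (butlast v, \<rho>') \<and>
     (\<forall>w. \<not> prefix v w \<longrightarrow> \<rho>' w = \<rho> w)"

lemma leave_vertex:
  assumes "0 < d" "v \<noteq> []" "\<rho> v = d - 1" "\<forall>c\<in>{1..<d}. good d k (v @ [c]) \<rho>"
  shows "walk (rr_step d) (\<lambda>s. prefix v (fst s)) 1 (v, \<rho>) (butlast v, \<rho>(v := d))"
    and "good d (Suc k) v (\<rho>(v := d))"
proof -
  have "next_dir d (d - 1) = d" using assms(1) by (auto simp: next_dir_def)
  then show "walk (rr_step d) (\<lambda>s. prefix v (fst s)) 1 (v, \<rho>) (butlast v, \<rho>(v := d))"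
    using walk_step[of "\<lambda>s. prefix v (fst s)" "(v, \<rho>)" "rr_step d"] assms(2,3)
    by (simp add: rr_step_eq nbr_def)
  show "good d (Suc k) v (\<rho>(v := d))"
    using assms(4) by (simp add: good_unfold[of d "Suc k"])
qed

lemma prefix_siblings: "prefix (v @ [c]) w \<Longrightarrow> prefix (v @ [c']) w \<Longrightarrow> c = c'"
  by (auto simp: prefix_def)

lemma visit_children:
  assumes v: "v \<noteq> []"
    and IH: "\<And>w \<sigma>. w \<noteq> [] \<Longrightarrow> good d k w \<sigma> \<Longrightarrow>
               \<exists>t \<sigma>'. excursion d w \<sigma> t \<sigma>' \<and> good d (Suc k) w \<sigma>'"
    and root: "\<rho> v = d" and children: "\<forall>c\<in>{1..<d}. good d k (v @ [c]) \<rho>"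
    and "j \<le> d - 1"
  shows "\<exists>t \<rho>j. walk (rr_step d) (\<lambda>s. prefix v (fst s)) t (v, \<rho>) (v, \<rho>j)
           \<and> \<rho>j v = (if j = 0 then d else j) \<and> (\<forall>w. \<not> prefix v w \<longrightarrow> \<rho>j w = \<rho> w)
           \<and> (\<forall>c\<in>{1..<d}. good d (if c \<le> j then Suc k else k) (v @ [c]) \<rho>j)"
  using \<open>j \<le> d - 1\<close>
proof (induction j)
  case 0
  show ?case
    using root children by (intro exI[of _ 0] exI[of _ \<rho>]) (simp add: walk_def)
next
  case (Suc j)
  then obtain t \<rho>j where run: "walk (rr_step d) (\<lambda>s. prefix v (fst s)) t (v, \<rho>) (v, \<rho>j)"
    and rot: "\<rho>j v = (if j = 0 then d else j)"
    and frame: "\<forall>w. \<not> prefix v w \<longrightarrow> \<rho>j w = \<rho> w"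
    and level: "\<forall>c\<in>{1..<d}. good d (if c \<le> j then Suc k else k) (v @ [c]) \<rho>j"
    by auto
  define c where "c = Suc j"
  have c: "c \<in> {1..<d}" using Suc.prems by (auto simp: c_def)
  define \<rho>1 where "\<rho>1 = \<rho>j(v := c)"
  have "next_dir d (\<rho>j v) = c" using rot c by (auto simp: next_dir_def c_def)
  then have enter: "walk (rr_step d) (\<lambda>s. prefix v (fst s)) 1 (v, \<rho>j) (v @ [c], \<rho>1)"
    using walk_step[of "\<lambda>s. prefix v (fst s)" "(v, \<rho>j)" "rr_step d"] v c
    by (simp add: rr_step_eq nbr_def \<rho>1_def)
  have "good d k (v @ [c]) \<rho>j"
    using level[rule_format, OF c] by (simp add: c_def)
  then have "good d k (v @ [c]) \<rho>1" by (simp add: \<rho>1_def)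
  then obtain t2 \<rho>2 where exc: "excursion d (v @ [c]) \<rho>1 t2 \<rho>2"
    and up: "good d (Suc k) (v @ [c]) \<rho>2"
    using IH by blast
  have "walk (rr_step d) (\<lambda>s. prefix (v @ [c]) (fst s)) t2 (v @ [c], \<rho>1) (v, \<rho>2)"
    using exc by (simp add: excursion_def)
  then have exit: "walk (rr_step d) (\<lambda>s. prefix v (fst s)) t2 (v @ [c], \<rho>1) (v, \<rho>2)"
    by (rule walk_mono) (auto dest: append_prefixD)
  have frame2: "\<rho>2 w = \<rho>1 w" if "\<not> prefix (v @ [c]) w" for w
    using exc that by (simp add: excursion_def)
  have other: "good d k' (v @ [c']) \<rho>2 = good d k' (v @ [c']) \<rho>j" if "c' \<noteq> c" for c' k'
  proof (rule good_cong)
    fix w assume w: "prefix (v @ [c']) w"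
    then have "\<not> prefix (v @ [c]) w" "w \<noteq> v"
      using that prefix_siblings[of v c w c'] by auto
    then show "\<rho>2 w = \<rho>j w" by (simp add: frame2 \<rho>1_def)
  qed
  have "walk (rr_step d) (\<lambda>s. prefix v (fst s)) (t + 1 + t2) (v, \<rho>) (v, \<rho>2)"
    using walk_trans[OF walk_trans[OF run enter] exit] .
  moreover have "\<rho>2 v = c" using frame2[of v] by (simp add: \<rho>1_def)
  moreover have "\<rho>2 w = \<rho> w" if "\<not> prefix v w" for w
  proof -
    have "\<not> prefix (v @ [c]) w" "w \<noteq> v" using that by (auto dest: append_prefixD)
    then show ?thesis using frame that by (simp add: frame2 \<rho>1_def)
  qed
  moreover have "good d (if c' \<le> Suc j then Suc k else k) (v @ [c']) \<rho>2"
    if "c' \<in> {1..<d}" for c'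
    using level up other that by (cases "c' = c") (auto simp: c_def le_Suc_eq)
  ultimately show ?case
    by (intro exI[of _ "t + 1 + t2"] exI[of _ \<rho>2]) (simp add: c_def)
qed

lemma excursion:
  assumes d2: "d \<ge> 2"
  shows "v \<noteq> [] \<Longrightarrow> good d k v \<rho> \<Longrightarrow> \<exists>t \<rho>'. excursion d v \<rho> t \<rho>' \<and> good d (Suc k) v \<rho>'"
proof (induction k arbitrary: v \<rho>)
  case 0
  then have "\<rho> v = d - 1" "\<forall>c\<in>{1..<d}. good d 0 (v @ [c]) \<rho>"
    using good_unfold[of d 0 v \<rho>] by simp_all
  moreover have "0 < d" using d2 by simp
  ultimately have exit: "walk (rr_step d) (\<lambda>s. prefix v (fst s)) 1 (v, \<rho>) (butlast v, \<rho>(v := d))"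
    and up: "good d (Suc 0) v (\<rho>(v := d))"
    using leave_vertex[of d v \<rho> 0] \<open>v \<noteq> []\<close> by auto
  have "excursion d v \<rho> 1 (\<rho>(v := d))"
    using exit by (auto simp: excursion_def)
  then show ?case using up by blast
next
  case (Suc k)
  then have "\<rho> v = d" "\<forall>c\<in>{1..<d}. good d k (v @ [c]) \<rho>"
    using good_unfold[of d "Suc k" v \<rho>] by simp_all
  from visit_children[OF \<open>v \<noteq> []\<close> Suc.IH this order_refl]
  obtain t \<rho>j where run: "walk (rr_step d) (\<lambda>s. prefix v (fst s)) t (v, \<rho>) (v, \<rho>j)"
    and rot: "\<rho>j v = (if d - 1 = 0 then d else d - 1)"
    and frame: "\<forall>w. \<not> prefix v w \<longrightarrow> \<rho>j w = \<rho> w"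
    and children: "\<forall>c\<in>{1..<d}. good d (if c \<le> d - 1 then Suc k else k) (v @ [c]) \<rho>j"
    by blast
  have "\<rho>j v = d - 1" using rot d2 by simp
  moreover have "\<forall>c\<in>{1..<d}. good d (Suc k) (v @ [c]) \<rho>j"
  proof
    fix c assume c: "c \<in> {1..<d}"
    then have "c \<le> d - 1" by auto
    with children[rule_format, OF c] show "good d (Suc k) (v @ [c]) \<rho>j" by simp
  qed
  ultimately have exit: "walk (rr_step d) (\<lambda>s. prefix v (fst s)) 1 (v, \<rho>j) (butlast v, \<rho>j(v := d))"
    and up: "good d (Suc (Suc k)) v (\<rho>j(v := d))"
    using leave_vertex[OF _ \<open>v \<noteq> []\<close>] d2 by auto
  have "excursion d v \<rho> (t + 1) (\<rho>j(v := d))"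
    using walk_trans[OF run exit] frame by (auto simp: excursion_def)
  then show ?case using up by blast
qed

definition branches_good :: "nat \<Rightarrow> rotors \<Rightarrow> bool" where
  "branches_good d \<rho> \<longleftrightarrow> (\<forall>i. \<exists>k. good d k [i] \<rho>)"

lemma chip_returns:
  assumes d2: "d \<ge> 2" and branches: "branches_good d \<rho>"
  defines "\<rho>' \<equiv> snd ((rr_step d ^^ return_time d \<rho>) (origin, \<rho>))"
  shows "0 < return_time d \<rho>"
    and "fst ((rr_step d ^^ return_time d \<rho>) (origin, \<rho>)) = origin"
    and "branches_good d \<rho>'"
proof -
  define r where "r = next_dir d (\<rho> [])"
  define \<rho>1 where "\<rho>1 = \<rho>([] := r)"
  have first: "rr_step d ([], \<rho>) = ([r], \<rho>1)"
    by (simp add: rr_step_eq nbr_def r_def \<rho>1_def)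
  obtain k where "good d k [r] \<rho>" using branches by (auto simp: branches_good_def)
  then have "good d k [r] \<rho>1" by (simp add: \<rho>1_def)
  then obtain t \<rho>2 where exc: "excursion d [r] \<rho>1 t \<rho>2" and up: "good d (Suc k) [r] \<rho>2"
    using excursion[OF d2] by blast
  have shift: "(rr_step d ^^ Suc s) ([], \<rho>) = (rr_step d ^^ s) ([r], \<rho>1)" for s
    by (simp only: funpow_Suc_right o_apply first)
  \<comment> \<open>Between time 1 and time t the chip is inside the branch [r], so t+1 is the
    first return time.\<close>
  have rt: "return_time d \<rho> = Suc t"
    unfolding return_time_def origin_def
  proof (rule Least_equality)
    show "0 < Suc t \<and> fst ((rr_step d ^^ Suc t) ([], \<rho>)) = []"
      using exc shift by (simp add: excursion_def walk_def)
    fix s assume s: "0 < s \<and> fst ((rr_step d ^^ s) ([], \<rho>)) = []"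
    then obtain s' where s': "s = Suc s'" by (cases s) auto
    have "\<not> s' < t"
    proof
      assume "s' < t"
      then have "prefix [r] (fst ((rr_step d ^^ s') ([r], \<rho>1)))"
        using exc by (simp add: excursion_def walk_def)
      with s s' shift show False by simp
    qed
    then show "Suc t \<le> s" using s' by simp
  qed
  have final: "(rr_step d ^^ return_time d \<rho>) (origin, \<rho>) = (origin, \<rho>2)"
    using exc rt shift by (simp add: excursion_def walk_def origin_def)
  then show "0 < return_time d \<rho>" "fst ((rr_step d ^^ return_time d \<rho>) (origin, \<rho>)) = origin"
    using rt by simp_all
  \<comment> \<open>The excursion changed only rotors inside the branch [r].\<close>
  have "\<exists>k. good d k [i] \<rho>2" for i
  proof (cases "i = r")
    case False
    have "good d k' [i] \<rho>2 = good d k' [i] \<rho>" for k'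
    proof (rule good_cong)
      fix w assume "prefix [i] w"
      then have "\<not> prefix [r] w" "w \<noteq> []"
        using False prefix_siblings[of "[]" i w r] by auto
      then show "\<rho>2 w = \<rho> w" using exc by (simp add: excursion_def \<rho>1_def)
    qed
    then show ?thesis using branches by (simp add: branches_good_def)
  qed (use up in blast)
  then show "branches_good d \<rho>'" using final by (simp add: \<rho>'_def branches_good_def)
qed

theorem mainTheorem10:
  fixes d :: nat
  assumes "d \<ge> 3"
  shows "\<forall>n. \<exists>t>0. fst ((rr_step d ^^ t) (origin, chip_rotors d n)) = origin"
proof
  fix n
  from assms have d2: "d \<ge> 2" by simp
  have "branches_good d (chip_rotors d n)"
  proof (induction n)
    case 0
    show ?case by (auto simp: branches_good_def good_def init_rotors_def)
  next
    case (Suc n)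
    then show ?case using chip_returns(3)[OF d2] by simp
  qed
  then show "\<exists>t>0. fst ((rr_step d ^^ t) (origin, chip_rotors d n)) = origin"
    using chip_returns(1,2)[OF d2] by blast
qed

end
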